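(* Let $a,b,c,d,e,f\in[0,1]$ and $t_j,t_k,t_h\in(0,1)$. With $A_i,B_i,C_i$ as defined below, if $A_i=d^2+e^2+f^2+2def-1>0$, then $\Delta_i:=B_i^2-4A_iC_i>0$.
   Context: $Q_3=2abef+2acdf+2bcde+2abd+2ace+2bcf+2def+a^2+b^2+c^2+d^2+e^2+f^2-a^2f^2-b^2e^2-c^2d^2-1$; $A_i=d^2+e^2+f^2+2def-1$; $B_i=-\big[2t_j((1-f^2)a+bd+ce+bef+cdf)+2t_k((1-e^2)b+ad+cf+aef+cde)+2t_h((1-d^2)c+ae+bf+adf+bde)\big]$; $C_i=-\big[t_j^2(1-b^2-c^2-f^2-2bcf)+t_k^2(1-a^2-c^2-e^2-2ace)+t_h^2(1-a^2-b^2-d^2-2abd)+2t_jt_k((1-c^2)d+ab+ef+acf+bce)+2t_jt_h((1-b^2)e+ac+df+abf+bcd)+2t_kt_h((1-a^2)f+bc+de+abe+acd)+Q_3\big]$. In the paper, $a,\dots,f$ are $\cos\Phi_{ij},\cos\Phi_{ik},\cos\Phi_{ih},\cos\Phi_{jk},\cos\Phi_{jh},\cos\Phi_{kh}$ for weights $\Phi\in[0,\frac\pi2]$ on a truncated tetrahedron $\{ijkh\}$, $t_\nu=\tanh r_\nu$, and $A_it_i^2+B_it_i+C_i=-Q_2$, where $Q_2>0$ characterizes non-degeneracy of the tetrahedron. *)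

theory Defs
  imports Complex_Main
begin

definition Q3 :: "real \<Rightarrow> real \<Rightarrow> real \<Rightarrow> real \<Rightarrow> real \<Rightarrow> real \<Rightarrow> real" where
  "Q3 a b c d e f = 2*a*b*e*f + 2*a*c*d*f + 2*b*c*d*e + 2*a*b*d + 2*a*c*e + 2*b*c*f + 2*d*e*f
     + a^2 + b^2 + c^2 + d^2 + e^2 + f^2 - a^2*f^2 - b^2*e^2 - c^2*d^2 - 1"

definition coefA :: "real \<Rightarrow> real \<Rightarrow> real \<Rightarrow> real" where
  "coefA d e f = d^2 + e^2 + f^2 + 2*d*e*f - 1"

definition coefB :: "real \<Rightarrow> real \<Rightarrow> real \<Rightarrow> real \<Rightarrow> real \<Rightarrow> real \<Rightarrow> real \<Rightarrow> real \<Rightarrow> real \<Rightarrow> real" where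
  "coefB a b c d e f tj tk th =
     - (2*tj*((1 - f^2)*a + b*d + c*e + b*e*f + c*d*f)
      + 2*tk*((1 - e^2)*b + a*d + c*f + a*e*f + c*d*e)
      + 2*th*((1 - d^2)*c + a*e + b*f + a*d*f + b*d*e))"

definition coefC :: "real \<Rightarrow> real \<Rightarrow> real \<Rightarrow> real \<Rightarrow> real \<Rightarrow> real \<Rightarrow> real \<Rightarrow> real \<Rightarrow> real \<Rightarrow> real" where
  "coefC a b c d e f tj tk th =
     - (tj^2*(1 - b^2 - c^2 - f^2 - 2*b*c*f)
      + tk^2*(1 - a^2 - c^2 - e^2 - 2*a*c*e)
      + th^2*(1 - a^2 - b^2 - d^2 - 2*a*b*d)
      + 2*tj*tk*((1 - c^2)*d + a*b + e*f + a*c*f + b*c*e)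
      + 2*tj*th*((1 - b^2)*e + a*c + d*f + a*b*f + b*c*d)
      + 2*tk*th*((1 - a^2)*f + b*c + d*e + a*b*e + a*c*d)
      + Q3 a b c d e f)"

end

theory Submission
  imports Defs
begin

text \<open>The discriminant factors as 4 (A + q(a,b,c)) (A + q(tj,tk,th)), where q is a quadratic
  form whose coefficients are all nonnegative for d, e, f in [0,1]; with A > 0 and nonnegative
  arguments both factors are positive.\<close>

text \<open>The quadratic form of the adjugate of the Gram matrix [[1,-d,-e],[-d,1,-f],[-e,-f,1]],
  whose determinant is -coefA d e f.\<close>
definition adj_gram_form :: "real \<Rightarrow> real \<Rightarrow> real \<Rightarrow> real \<Rightarrow> real \<Rightarrow> real \<Rightarrow> real" where
  "adj_gram_form d e f x y z =
     (1 - f^2)*x*x + (1 - e^2)*y*y + (1 - d^2)*z*z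
     + 2*(d + e*f)*x*y + 2*(e + d*f)*x*z + 2*(f + d*e)*y*z"

lemma discriminant_eq_adj_gram_form_product:
  "(coefB a b c d e f tj tk th)^2 - 4 * coefA d e f * coefC a b c d e f tj tk th
   = 4 * (coefA d e f + adj_gram_form d e f a b c) * (coefA d e f + adj_gram_form d e f tj tk th)"
  unfolding coefA_def coefB_def coefC_def Q3_def adj_gram_form_def
  by (simp add: algebra_simps power2_eq_square)

lemma adj_gram_form_nonneg:
  assumes "d \<in> {0..1}" "e \<in> {0..1}" "f \<in> {0..1}" "x \<ge> 0" "y \<ge> 0" "z \<ge> 0"
  shows "adj_gram_form d e f x y z \<ge> 0"
proof -
  have "f^2 \<le> 1" "e^2 \<le> 1" "d^2 \<le> 1"
    using assms by (auto simp: power_le_one)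
  then show ?thesis
    using assms unfolding adj_gram_form_def
    by (intro add_nonneg_nonneg mult_nonneg_nonneg) auto
qed

theorem lemma2p4:
  fixes a b c d e f tj tk th :: real
  assumes "a \<in> {0..1}" "b \<in> {0..1}" "c \<in> {0..1}"
      and "d \<in> {0..1}" "e \<in> {0..1}" "f \<in> {0..1}"
      and "tj \<in> {0<..<1}" "tk \<in> {0<..<1}" "th \<in> {0<..<1}"
      and "coefA d e f > 0"
  shows "(coefB a b c d e f tj tk th)^2 - 4 * coefA d e f * coefC a b c d e f tj tk th > 0"
proof -
  have "adj_gram_form d e f a b c \<ge> 0" "adj_gram_form d e f tj tk th \<ge> 0"
    using assms by (simp_all add: adj_gram_form_nonneg)
  with \<open>coefA d e f > 0\<close> show ?thesis
    unfolding discriminant_eq_adj_gram_form_product by simp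
qed

end
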